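(* For all $T,S\in\,!\Lambda$, if $T\Rightarrow_v S$ then $S\Rightarrow_v T^*$.
   Context: Bang calculus terms $!\Lambda$: $T,S,R ::= x \mid \lambda x.T \mid T\,S \mid \mathrm{der}\,T \mid\ !T$ over a countably infinite set of variables, $\lambda$ the only binder, up to $\alpha$-conversion; $T\{S/x\}$ is capture-avoiding substitution. Parallel $v$-reduction $\Rightarrow_v$ is the least relation closed under the rules: $x\Rightarrow_v x$; if $T\Rightarrow_v S$ then $\lambda x.T\Rightarrow_v\lambda x.S$, $!T\Rightarrow_v\,!S$ and $\mathrm{der}\,T\Rightarrow_v\mathrm{der}\,S$; if $T\Rightarrow_v S$ and $R\Rightarrow_v Q$ then $T\,R\Rightarrow_v S\,Q$ and $(\lambda x.T)(!R)\Rightarrow_v S\{Q/x\}$. The full development $T^*$ is defined by induction: $x^*=x$, $(\lambda x.T)^*=\lambda x.T^*$, $(!T)^*=\,!(T^* )$, $(\mathrm{der}\,T)^*=\mathrm{der}(T^* )$, $((\lambda x.T)(!S))^*=T^*\{S^*/x\}$, and $(T\,S)^*=T^*\,S^*$ if $T$ is not an abstraction or $S$ is not a box. *)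

theory Defs
  imports Main
begin

text \<open>Bang calculus terms, up to alpha-conversion, represented with de Bruijn indices.
  Var n is the variable with index n; Lam binds index 0.\<close>

datatype bterm = Var nat | Lam bterm | App bterm bterm | Der bterm | Bang bterm

fun lift :: "bterm \<Rightarrow> nat \<Rightarrow> bterm" where
  "lift (Var i) k = (if i < k then Var i else Var (Suc i))"
| "lift (Lam t) k = Lam (lift t (Suc k))"
| "lift (App s t) k = App (lift s k) (lift t k)"
| "lift (Der t) k = Der (lift t k)"
| "lift (Bang t) k = Bang (lift t k)"

text \<open>Capture-avoiding substitution: subst t s k replaces index k by s in t,
  decrementing the free indices above k (the binder is removed).\<close>
fun subst :: "bterm \<Rightarrow> bterm \<Rightarrow> nat \<Rightarrow> bterm" where
  "subst (Var i) s k = (if k < i then Var (i - 1) else if i = k then s else Var i)"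
| "subst (Lam t) s k = Lam (subst t (lift s 0) (Suc k))"
| "subst (App t u) s k = App (subst t s k) (subst u s k)"
| "subst (Der t) s k = Der (subst t s k)"
| "subst (Bang t) s k = Bang (subst t s k)"

inductive par_v :: "bterm \<Rightarrow> bterm \<Rightarrow> bool" where
  pv_var: "par_v (Var x) (Var x)"
| pv_lam: "par_v t s \<Longrightarrow> par_v (Lam t) (Lam s)"
| pv_bang: "par_v t s \<Longrightarrow> par_v (Bang t) (Bang s)"
| pv_der: "par_v t s \<Longrightarrow> par_v (Der t) (Der s)"
| pv_app: "par_v t s \<Longrightarrow> par_v r q \<Longrightarrow> par_v (App t r) (App s q)"
| pv_beta: "par_v t s \<Longrightarrow> par_v r q \<Longrightarrow> par_v (App (Lam t) (Bang r)) (subst s q 0)"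

fun dev :: "bterm \<Rightarrow> bterm" where
  "dev (Var x) = Var x"
| "dev (Lam t) = Lam (dev t)"
| "dev (Bang t) = Bang (dev t)"
| "dev (Der t) = Der (dev t)"
| "dev (App (Lam t) (Bang s)) = subst (dev t) (dev s) 0"
| "dev (App t s) = App (dev t) (dev s)"

end

theory Submission
  imports Defs
begin

text \<open>Takahashi's argument: induct on the derivation of T =>v S. The only delicate cases
  are the redexes. A contracted redex is handled by substitutivity of =>v, which rests on
  the usual de Bruijn commutation laws of lift and subst. A redex (\<lambda>x.T)(!R) reduced only
  congruently stays a redex, since abstractions and boxes reduce to abstractions and boxes,
  and one more contraction reaches its full development.\<close>

lemma lift_lift:
  "i \<le> k \<Longrightarrow> lift (lift t i) (Suc k) = lift (lift t k) i"
  by (induct t arbitrary: i k) auto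

lemma lift_subst_ge:
  "j \<le> i \<Longrightarrow> lift (subst t s j) i = subst (lift t (Suc i)) (lift s i) j"
  by (induct t arbitrary: i j s) (simp_all add: diff_Suc lift_lift split: nat.split)

lemma lift_subst_le:
  "i \<le> j \<Longrightarrow> lift (subst t s j) i = subst (lift t i) (lift s i) (Suc j)"
  by (induct t arbitrary: i j s) (auto simp: lift_lift)

lemma subst_lift [simp]: "subst (lift t k) s k = t"
  by (induct t arbitrary: k s) simp_all

lemma subst_subst:
  "i \<le> j \<Longrightarrow> subst (subst t (lift v i) (Suc j)) (subst u v j) i = subst (subst t u i) v j"
  by (induct t arbitrary: i j u v)
    (simp_all add: diff_Suc lift_lift [symmetric] lift_subst_le split: nat.split)

lemma par_v_refl: "par_v t t"
  by (induct t) (auto intro: par_v.intros)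

lemma par_v_lift: "par_v t t' \<Longrightarrow> par_v (lift t k) (lift t' k)"
proof (induct arbitrary: k rule: par_v.induct)
  case (pv_beta t s r q)
  then have "par_v (App (Lam (lift t (Suc k))) (Bang (lift r k)))
                   (subst (lift s (Suc k)) (lift q k) 0)"
    by (intro par_v.pv_beta) auto
  then show ?case by (simp add: lift_subst_ge)
qed (auto intro: par_v.intros)

lemma par_v_subst:
  "par_v t t' \<Longrightarrow> par_v s s' \<Longrightarrow> par_v (subst t s k) (subst t' s' k)"
proof (induct arbitrary: s s' k rule: par_v.induct)
  case (pv_beta t t' r r')
  then have "par_v (App (Lam (subst t (lift s 0) (Suc k))) (Bang (subst r s k)))
                   (subst (subst t' (lift s' 0) (Suc k)) (subst r' s' k) 0)"
    by (intro par_v.pv_beta) (auto intro: par_v_lift)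
  then show ?case by (simp add: subst_subst)
next
  case (pv_lam t t')
  then show ?case by (simp add: par_v_lift par_v.pv_lam)
qed (auto intro: par_v.intros par_v_lift par_v_refl)

inductive_cases par_v_LamE: "par_v (Lam t) u"
inductive_cases par_v_BangE: "par_v (Bang t) u"

lemma dev_App_non_redex:
  "\<nexists>t0 r0. t = Lam t0 \<and> r = Bang r0 \<Longrightarrow> dev (App t r) = App (dev t) (dev r)"
  by (cases t; cases r) auto

lemma par_v_App_dev:
  assumes "par_v t s" "par_v s (dev t)" "par_v r q" "par_v q (dev r)"
  shows "par_v (App s q) (dev (App t r))"
proof (cases "\<exists>t0 r0. t = Lam t0 \<and> r = Bang r0")
  case True
  then obtain t0 r0 where t: "t = Lam t0" and r: "r = Bang r0" by blast
  from assms(1) obtain s0 where s: "s = Lam s0"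
    unfolding t by (auto elim: par_v_LamE)
  from assms(3) obtain q0 where q: "q = Bang q0"
    unfolding r by (auto elim: par_v_BangE)
  have "par_v s0 (dev t0)" using assms(2) by (auto simp: s t elim: par_v_LamE)
  moreover have "par_v q0 (dev r0)" using assms(4) by (auto simp: q r elim: par_v_BangE)
  ultimately show ?thesis by (simp add: s t q r par_v.pv_beta)
next
  case False
  then show ?thesis using assms by (simp add: dev_App_non_redex par_v.pv_app)
qed

theorem mainTheorem5:
  fixes T S :: bterm
  assumes "par_v T S"
  shows "par_v S (dev T)"
  using assms
proof (induct rule: par_v.induct)
  case (pv_app t s r q)
  then show ?case by (rule par_v_App_dev)
next
  case (pv_beta t s r q)
  then show ?case by (simp add: par_v_subst)
qed (auto intro: par_v.intros)

end
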